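(* There exists $M_1>\sqrt{2(n-1)}$ with the following property. Let $f$ be a solution of $\frac{f''}{1+(f')^2}=\left(\frac r2-\frac{n-1}{r}\right)f'-\frac f2$ with $f(\sqrt{2(n-1)})>0$, and suppose $f'(r)\le 0$ for all $r\ge\sqrt{2(n-1)}$ in its domain. Then $f(r)<0$ whenever $r>M_1$ and $f(r)$ is defined.
   Context: $n\ge2$ is a fixed integer; $f$ is a real function of $r>0$ defined on an interval containing $\sqrt{2(n-1)}$ (curves $(f(r),r)$ with this equation are the profile geodesics written as graphs over the $r$-axis). *)

theory Defs
  imports "HOL-Analysis.Analysis"
begin

end

theory Submission
  imports Defs
begin

text \<open>
  Past \<open>r\<^sub>0 = sqrt (2(n-1))\<close> the drift coefficient \<open>r/2 - (n-1)/r\<close> is nonnegative, so as long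
  as \<open>f \<ge> 0\<close> and \<open>f' \<le> 0\<close> the equation gives \<open>f'' \<le> -f/2\<close>. If \<open>f\<close> stayed nonnegative up to
  some \<open>r > r\<^sub>0 + 2\<pi>\<close>, then, being decreasing, it would be nonnegative on all of
  \<open>[r\<^sub>0, r\<^sub>0 + 2\<pi>]\<close>; Sturm comparison with \<open>sin ((r - r\<^sub>0)/2)\<close>, a solution of \<open>y'' = -y/4\<close> vanishing
  at both ends, then forces \<open>f (r\<^sub>0 + 2\<pi>) \<le> -f r\<^sub>0 < 0\<close>, a contradiction. Hence \<open>M\<^sub>1 = r\<^sub>0 + 2\<pi>\<close>.
\<close>

lemma DERIV_nonpos_imp_decreasing_within:
  fixes g g' :: "real \<Rightarrow> real"
  assumes "a \<le> b" and "{a..b} \<subseteq> S"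
    and deriv: "\<And>x. x \<in> {a..b} \<Longrightarrow> (g has_real_derivative g' x) (at x within S)"
    and nonpos: "\<And>x. x \<in> {a..b} \<Longrightarrow> g' x \<le> 0"
  shows "g b \<le> g a"
proof (rule DERIV_nonpos_imp_decreasing_open[OF \<open>a \<le> b\<close>])
  have deriv_Icc: "(g has_real_derivative g' x) (at x within {a..b})" if "x \<in> {a..b}" for x
    using DERIV_subset[OF deriv[OF that] \<open>{a..b} \<subseteq> S\<close>] .
  then show "continuous_on {a..b} g"
    by (meson DERIV_continuous continuous_on_eq_continuous_within)
  fix x assume "a < x" "x < b"
  then have "(g has_real_derivative g' x) (at x)"
    using deriv_Icc[of x] at_within_Icc_at[of a x b] by auto
  with nonpos[of x] \<open>a < x\<close> \<open>x < b\<close> show "\<exists>y. (g has_real_derivative y) (at x) \<and> y \<le> 0"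
    by auto
qed

text \<open>The Wronskian \<open>f' s - f s'\<close> with \<open>s = sin ((x - a)/2)\<close> is nonincreasing, because
  \<open>s \<ge> 0\<close> on the interval; its endpoint values are \<open>-f a/2\<close> and \<open>f (a + 2\<pi>)/2\<close>.\<close>

lemma sturm_comparison_sin_half:
  fixes f f' f'' :: "real \<Rightarrow> real"
  assumes "{a..a + 2*pi} \<subseteq> S"
    and df: "\<And>x. x \<in> {a..a + 2*pi} \<Longrightarrow> (f has_real_derivative f' x) (at x within S)"
    and df': "\<And>x. x \<in> {a..a + 2*pi} \<Longrightarrow> (f' has_real_derivative f'' x) (at x within S)"
    and super: "\<And>x. x \<in> {a..a + 2*pi} \<Longrightarrow> f'' x \<le> - f x / 4"
  shows "f (a + 2*pi) \<le> - f a"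
proof -
  define s where "s x = sin ((x - a)/2)" for x
  define c where "c x = cos ((x - a)/2)/2" for x
  define W where "W x = f' x * s x - f x * c x" for x
  have "W (a + 2*pi) \<le> W a"
  proof (rule DERIV_nonpos_imp_decreasing_within[OF _ \<open>{a..a + 2*pi} \<subseteq> S\<close>])
    fix x assume x: "x \<in> {a..a + 2*pi}"
    have "(s has_real_derivative c x) (at x within S)"
      unfolding s_def[abs_def] c_def by (auto intro!: derivative_eq_intros)
    moreover have "(c has_real_derivative - s x / 4) (at x within S)"
      unfolding s_def c_def[abs_def] by (auto intro!: derivative_eq_intros)
    ultimately have "(W has_real_derivative
        f'' x * s x + c x * f' x - (f' x * c x + (- s x / 4) * f x)) (at x within S)"
      unfolding W_def[abs_def] by (intro DERIV_diff DERIV_mult df df' x)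
    then show "(W has_real_derivative (f'' x + f x / 4) * s x) (at x within S)"
      by (simp add: algebra_simps)
    have "s x \<ge> 0"
      unfolding s_def using x by (intro sin_ge_zero) auto
    then show "(f'' x + f x / 4) * s x \<le> 0"
      using super[OF x] by (simp add: mult_nonpos_nonneg)
  qed simp
  moreover have "W a = - f a / 2" and "W (a + 2*pi) = f (a + 2*pi) / 2"
    unfolding W_def s_def c_def by simp_all
  ultimately show ?thesis by simp
qed

lemma drift_coefficient_nonneg:
  fixes m x :: real
  assumes "0 \<le> m" and "sqrt (2*m) \<le> x"
  shows "0 \<le> x/2 - m/x"
proof (cases "x = 0")
  case False
  with assms have "x > 0"
    using real_sqrt_ge_zero[of "2*m"] by linarith
  moreover have "2*m \<le> x\<^sup>2"
    using sqrt_le_D[OF \<open>sqrt (2*m) \<le> x\<close>] .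
  ultimately show ?thesis
    by (simp add: field_simps power2_eq_square)
qed simp

lemma second_derivative_bound:
  fixes y y' y'' k :: real
  assumes eq: "y'' / (1 + y'\<^sup>2) = k * y' - y / 2"
    and "0 \<le> k" and "y' \<le> 0" and "0 \<le> y"
  shows "y'' \<le> - y / 2"
proof -
  define X where "X = k * y' - y / 2"
  have "X \<le> - y / 2"
    unfolding X_def using mult_nonneg_nonpos[OF \<open>0 \<le> k\<close> \<open>y' \<le> 0\<close>] by simp
  moreover from this have "y'\<^sup>2 * X \<le> 0"
    using \<open>0 \<le> y\<close> by (simp add: mult_nonneg_nonpos)
  moreover have "y'' = (1 + y'\<^sup>2) * X"
    using eq[folded X_def] add_pos_nonneg[of 1 "y'\<^sup>2"] by (simp add: divide_eq_eq mult.commute)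
  ultimately show ?thesis by (simp add: algebra_simps)
qed

lemma profile_negative_beyond:
  fixes f f' f'' :: "real \<Rightarrow> real" and m r :: real
  defines "r\<^sub>0 \<equiv> sqrt (2*m)"
  assumes "0 \<le> m" and "is_interval I" and "r\<^sub>0 \<in> I" and "r \<in> I" and "r\<^sub>0 + 2*pi < r"
    and df: "\<And>x. x \<in> I \<Longrightarrow> (f has_real_derivative f' x) (at x within I)"
    and df': "\<And>x. x \<in> I \<Longrightarrow> (f' has_real_derivative f'' x) (at x within I)"
    and ode: "\<And>x. x \<in> I \<Longrightarrow> f'' x / (1 + (f' x)\<^sup>2) = (x/2 - m/x) * f' x - f x / 2"
    and "0 < f r\<^sub>0"
    and decreasing: "\<And>x. x \<in> I \<Longrightarrow> r\<^sub>0 \<le> x \<Longrightarrow> f' x \<le> 0"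
  shows "f r < 0"
proof (rule ccontr)
  assume "\<not> f r < 0"
  have sub: "{r\<^sub>0..r} \<subseteq> I"
    using mem_is_interval_1_I[OF \<open>is_interval I\<close> \<open>r\<^sub>0 \<in> I\<close> \<open>r \<in> I\<close>] by auto
  have nonneg: "0 \<le> f x" if "x \<in> {r\<^sub>0..r}" for x
  proof -
    have "f r \<le> f x"
      by (rule DERIV_nonpos_imp_decreasing_within[of x r I f f'])
        (use that sub in \<open>auto intro!: df decreasing\<close>)
    with \<open>\<not> f r < 0\<close> show ?thesis by simp
  qed
  have "f'' x \<le> - f x / 4" if "x \<in> {r\<^sub>0..r}" for x
  proof -
    have "x \<in> I" and "r\<^sub>0 \<le> x"
      using that sub by auto
    have "0 \<le> x/2 - m/x"
      using \<open>0 \<le> m\<close> \<open>r\<^sub>0 \<le> x\<close> unfolding r\<^sub>0_def by (rule drift_coefficient_nonneg)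
    then have "f'' x \<le> - f x / 2"
      using second_derivative_bound[OF ode[OF \<open>x \<in> I\<close>]] decreasing[OF \<open>x \<in> I\<close> \<open>r\<^sub>0 \<le> x\<close>]
        nonneg[OF that] by blast
    with nonneg[OF that] show ?thesis by simp
  qed
  then have "f (r\<^sub>0 + 2*pi) \<le> - f r\<^sub>0"
    using sub \<open>r\<^sub>0 + 2*pi < r\<close>
    by (auto intro!: sturm_comparison_sin_half[of r\<^sub>0 I f f' f''] df df')
  moreover have "0 \<le> f (r\<^sub>0 + 2*pi)"
    using \<open>r\<^sub>0 + 2*pi < r\<close> by (intro nonneg) simp
  ultimately show False
    using \<open>0 < f r\<^sub>0\<close> by simp
qed

theorem lemma2p5:
  fixes n :: nat
  assumes "n \<ge> 2"
  shows "\<exists>M1 > sqrt (2 * (real n - 1)).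
    \<forall>(I :: real set) (f :: real \<Rightarrow> real) f' f''.
      is_interval I \<and> I \<subseteq> {0<..} \<and> sqrt (2 * (real n - 1)) \<in> I \<and>
      (\<forall>r\<in>I. (f has_real_derivative f' r) (at r within I) \<and>
               (f' has_real_derivative f'' r) (at r within I) \<and>
               f'' r / (1 + (f' r)\<^sup>2) = (r / 2 - (real n - 1) / r) * f' r - f r / 2) \<and>
      f (sqrt (2 * (real n - 1))) > 0 \<and>
      (\<forall>r\<in>I. r \<ge> sqrt (2 * (real n - 1)) \<longrightarrow> f' r \<le> 0)
      \<longrightarrow> (\<forall>r\<in>I. r > M1 \<longrightarrow> f r < 0)"
proof (intro exI[of _ "sqrt (2 * (real n - 1)) + 2*pi"] conjI allI impI ballI)
  fix I :: "real set" and f f' f'' :: "real \<Rightarrow> real" and r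
  assume hyps: "is_interval I \<and> I \<subseteq> {0<..} \<and> sqrt (2 * (real n - 1)) \<in> I \<and>
      (\<forall>r\<in>I. (f has_real_derivative f' r) (at r within I) \<and>
               (f' has_real_derivative f'' r) (at r within I) \<and>
               f'' r / (1 + (f' r)\<^sup>2) = (r / 2 - (real n - 1) / r) * f' r - f r / 2) \<and>
      f (sqrt (2 * (real n - 1))) > 0 \<and>
      (\<forall>r\<in>I. r \<ge> sqrt (2 * (real n - 1)) \<longrightarrow> f' r \<le> 0)"
    and "r \<in> I" and "sqrt (2 * (real n - 1)) + 2*pi < r"
  show "f r < 0"
    by (rule profile_negative_beyond[of "real n - 1" I r f f' f''])
      (use hyps \<open>n \<ge> 2\<close> \<open>r \<in> I\<close> \<open>sqrt (2 * (real n - 1)) + 2*pi < r\<close> in auto)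
qed simp

end
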